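(* For any fuzzifying topological space $(X,\tau)$ and $A\subseteq X$, $T_2^P(X,\tau)\le T_2^P(A,\tau/A)$, i.e. $\vDash T_2^P(X,\tau)\to T_2^P(A,\tau/A)$.
   Context: A fuzzifying topology on $X$ is $\tau:P(X)\to[0,1]$ with $\tau(X)=1$, $\tau(A\cap B)\ge\min(\tau(A),\tau(B))$, $\tau(\bigcup A_\lambda)\ge\inf\tau(A_\lambda)$. $N_x(A)=\sup_{x\in B\subseteq A}\tau(B)$; $Cl(A)(x)=1-N_x(X\setminus A)$; for $\mu:X\to[0,1]$, $Int(\mu)(x)=\sup_{x\in B}\min(\tau(B),\inf_{y\in B}\mu(y))$; pre-open degrees $\tau_P(A)=\inf_{x\in A}Int(Cl(A))(x)$; $N^P_x(A)=\sup_{x\in B\subseteq A}\tau_P(B)$. $T_2^P(X,\tau)=\inf_{x,y\in X,x\ne y}\sup\{\min(N^P_x(U),N^P_y(V)):U,V\subseteq X,U\cap V=\emptyset\}$. For the subspace: $(\tau_P/A)(B)=\sup\{\tau_P(V):V\cap A=B\}$ for $B\subseteq A$, $N^{P^A}_x(U)=\sup_{x\in C\subseteq U}(\tau_P/A)(C)$, and $T_2^P(A,\tau/A)=\inf_{x,y\in A,x\ne y}\sup\{\min(N^{P^A}_x(U),N^{P^A}_y(V)):U,V\subseteq A,U\cap V=\emptyset\}$. *)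

theory Defs
  imports "HOL-Analysis.Analysis"
begin

text \<open>Fuzzifying topology on the universe of type 'a (X = UNIV).
 Suprema use the convention sup of empty = 0, infima inf of empty = 1;
 since all values lie in [0,1] we encode these as Sup (insert 0 S), Inf (insert 1 S).\<close>

definition sup0 :: "real set \<Rightarrow> real" where
  "sup0 S = Sup (insert 0 S)"

definition inf1 :: "real set \<Rightarrow> real" where
  "inf1 S = Inf (insert 1 S)"

definition fuzzifying_topology :: "('a set \<Rightarrow> real) \<Rightarrow> bool" where
  "fuzzifying_topology \<tau> \<longleftrightarrow>
     (\<forall>A. 0 \<le> \<tau> A \<and> \<tau> A \<le> 1) \<and>
     \<tau> UNIV = 1 \<and>
     (\<forall>A B. \<tau> (A \<inter> B) \<ge> min (\<tau> A) (\<tau> B)) \<and>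
     (\<forall>\<A>. \<tau> (\<Union>\<A>) \<ge> inf1 (\<tau> ` \<A>))"

definition fnbhd :: "('a set \<Rightarrow> real) \<Rightarrow> 'a \<Rightarrow> 'a set \<Rightarrow> real" where
  "fnbhd \<tau> x A = sup0 {\<tau> B | B. x \<in> B \<and> B \<subseteq> A}"

definition fclosure :: "('a set \<Rightarrow> real) \<Rightarrow> 'a set \<Rightarrow> 'a \<Rightarrow> real" where
  "fclosure \<tau> A x = 1 - fnbhd \<tau> x (- A)"

definition finterior :: "('a set \<Rightarrow> real) \<Rightarrow> ('a \<Rightarrow> real) \<Rightarrow> 'a \<Rightarrow> real" where
  "finterior \<tau> \<mu> x = sup0 {min (\<tau> B) (inf1 (\<mu> ` B)) | B. x \<in> B}"

definition preopen :: "('a set \<Rightarrow> real) \<Rightarrow> 'a set \<Rightarrow> real" where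
  "preopen \<tau> A = inf1 {finterior \<tau> (fclosure \<tau> A) x | x. x \<in> A}"

definition pre_nbhd :: "('a set \<Rightarrow> real) \<Rightarrow> 'a \<Rightarrow> 'a set \<Rightarrow> real" where
  "pre_nbhd \<tau> x A = sup0 {preopen \<tau> B | B. x \<in> B \<and> B \<subseteq> A}"

definition T2P :: "('a set \<Rightarrow> real) \<Rightarrow> real" where
  "T2P \<tau> = inf1 {sup0 {min (pre_nbhd \<tau> x U) (pre_nbhd \<tau> y V) | U V. U \<inter> V = {}}
                 | x y. x \<noteq> y}"

definition preopen_sub :: "('a set \<Rightarrow> real) \<Rightarrow> 'a set \<Rightarrow> 'a set \<Rightarrow> real" where
  "preopen_sub \<tau> A B = sup0 {preopen \<tau> V | V. V \<inter> A = B}"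

definition pre_nbhd_sub :: "('a set \<Rightarrow> real) \<Rightarrow> 'a set \<Rightarrow> 'a \<Rightarrow> 'a set \<Rightarrow> real" where
  "pre_nbhd_sub \<tau> A x U = sup0 {preopen_sub \<tau> A C | C. x \<in> C \<and> C \<subseteq> U}"

definition T2P_sub :: "('a set \<Rightarrow> real) \<Rightarrow> 'a set \<Rightarrow> real" where
  "T2P_sub \<tau> A = inf1 {sup0 {min (pre_nbhd_sub \<tau> A x U) (pre_nbhd_sub \<tau> A y V)
                              | U V. U \<subseteq> A \<and> V \<subseteq> A \<and> U \<inter> V = {}}
                       | x y. x \<in> A \<and> y \<in> A \<and> x \<noteq> y}"

end

theory Submission
  imports Defs
begin

text \<open>Every pre-open set \<open>B\<close> of \<open>X\<close> witnesses that \<open>B \<inter> A\<close> is pre-open in \<open>A\<close> to at least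
  the same degree, and disjoint \<open>U, V\<close> restrict to disjoint \<open>U \<inter> A, V \<inter> A\<close>. Hence for
  \<open>x, y \<in> A\<close> each separating pair in \<open>X\<close> yields one in \<open>A\<close> of no smaller degree, so the
  separation degree of every pair of points of \<open>A\<close> can only grow in the subspace, and the
  infimum over the (fewer) pairs of \<open>A\<close> is at least the infimum over all pairs of \<open>X\<close>.\<close>

lemma sup0_le:
  assumes "\<And>s. s \<in> S \<Longrightarrow> s \<le> c" and "0 \<le> c"
  shows "sup0 S \<le> c"
  unfolding sup0_def using assms by (intro cSup_least) auto

lemma sup0_upper:
  assumes "\<And>s. s \<in> S \<Longrightarrow> s \<le> c" and "s \<in> S"
  shows "s \<le> sup0 S"
  unfolding sup0_def using assms
  by (intro cSup_upper) (auto simp: bdd_above_def le_max_iff_disj intro!: exI[of _ "max c 0"])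

lemma sup0_nonneg:
  assumes "\<And>s. s \<in> S \<Longrightarrow> s \<le> c"
  shows "0 \<le> sup0 S"
  unfolding sup0_def using assms
  by (intro cSup_upper) (auto simp: bdd_above_def le_max_iff_disj intro!: exI[of _ "max c 0"])

lemma sup0_mono:
  assumes bounded: "\<And>s. s \<in> S \<Longrightarrow> s \<le> c" and dominated: "\<And>t. t \<in> T \<Longrightarrow> \<exists>s\<in>S. t \<le> s"
  shows "sup0 T \<le> sup0 S"
  unfolding sup0_def[of T]
proof (rule cSup_least)
  fix t assume "t \<in> insert 0 T"
  then show "t \<le> sup0 S"
  proof
    assume "t \<in> T"
    then obtain s where "s \<in> S" "t \<le> s" using dominated by blast
    then show ?thesis using sup0_upper[OF bounded] by (meson order_trans)
  qed (simp add: sup0_nonneg[OF bounded])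
qed auto

lemma inf1_le_one:
  assumes "\<And>s. s \<in> S \<Longrightarrow> 0 \<le> s"
  shows "inf1 S \<le> 1"
  unfolding inf1_def using assms
  by (intro cInf_lower) (auto simp: bdd_below_def intro!: exI[of _ 0])

lemma inf1_lower:
  assumes "\<And>s. s \<in> S \<Longrightarrow> 0 \<le> s" and "s \<in> S"
  shows "inf1 S \<le> s"
  unfolding inf1_def using assms
  by (intro cInf_lower) (auto simp: bdd_below_def intro!: exI[of _ 0])

lemma inf1_mono:
  assumes bounded: "\<And>s. s \<in> S \<Longrightarrow> 0 \<le> s" and dominated: "\<And>t. t \<in> T \<Longrightarrow> \<exists>s\<in>S. s \<le> t"
  shows "inf1 S \<le> inf1 T"
  unfolding inf1_def[of T]
proof (rule cInf_greatest)
  fix t assume "t \<in> insert 1 T"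
  then show "inf1 S \<le> t"
  proof
    assume "t \<in> T"
    then obtain s where "s \<in> S" "s \<le> t" using dominated by blast
    then show ?thesis using inf1_lower[OF bounded] by (meson order_trans)
  qed (simp add: inf1_le_one[OF bounded])
qed auto

definition pre_separation :: "('a set \<Rightarrow> real) \<Rightarrow> 'a \<Rightarrow> 'a \<Rightarrow> real" where
  "pre_separation \<tau> x y = sup0 {min (pre_nbhd \<tau> x U) (pre_nbhd \<tau> y V) | U V. U \<inter> V = {}}"

definition pre_separation_sub :: "('a set \<Rightarrow> real) \<Rightarrow> 'a set \<Rightarrow> 'a \<Rightarrow> 'a \<Rightarrow> real" where
  "pre_separation_sub \<tau> A x y =
     sup0 {min (pre_nbhd_sub \<tau> A x U) (pre_nbhd_sub \<tau> A y V) | U V. U \<subseteq> A \<and> V \<subseteq> A \<and> U \<inter> V = {}}"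

lemma T2P_eq_pre_separation: "T2P \<tau> = inf1 {pre_separation \<tau> x y | x y. x \<noteq> y}"
  unfolding T2P_def pre_separation_def ..

lemma T2P_sub_eq_pre_separation_sub:
  "T2P_sub \<tau> A = inf1 {pre_separation_sub \<tau> A x y | x y. x \<in> A \<and> y \<in> A \<and> x \<noteq> y}"
  unfolding T2P_sub_def pre_separation_sub_def ..

context
  fixes \<tau> :: "'a set \<Rightarrow> real"
  assumes ft: "fuzzifying_topology \<tau>"
begin

lemma open_degree_le_one: "\<tau> B \<le> 1"
  using ft unfolding fuzzifying_topology_def by auto

lemma finterior_nonneg: "0 \<le> finterior \<tau> \<mu> x"
  unfolding finterior_def
  by (rule sup0_nonneg[where c = 1]) (auto intro: order_trans[OF min.cobounded1 open_degree_le_one])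

lemma preopen_le_one: "preopen \<tau> B \<le> 1"
  unfolding preopen_def by (rule inf1_le_one) (auto intro: finterior_nonneg)

lemma preopen_sub_le_one: "preopen_sub \<tau> A B \<le> 1"
  unfolding preopen_sub_def by (rule sup0_le) (auto intro: preopen_le_one)

lemma pre_nbhd_le_one: "pre_nbhd \<tau> x U \<le> 1"
  unfolding pre_nbhd_def by (rule sup0_le) (auto intro: preopen_le_one)

lemma pre_nbhd_sub_le_one: "pre_nbhd_sub \<tau> A x U \<le> 1"
  unfolding pre_nbhd_sub_def by (rule sup0_le) (auto intro: preopen_sub_le_one)

lemma pre_separation_nonneg: "0 \<le> pre_separation \<tau> x y"
  unfolding pre_separation_def
  by (rule sup0_nonneg[where c = 1]) (auto simp: min_le_iff_disj pre_nbhd_le_one)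

lemma preopen_le_preopen_sub: "preopen \<tau> B \<le> preopen_sub \<tau> A (B \<inter> A)"
  unfolding preopen_sub_def by (rule sup0_upper[where c = 1]) (auto intro: preopen_le_one)

lemma pre_nbhd_le_pre_nbhd_sub:
  assumes "x \<in> A"
  shows "pre_nbhd \<tau> x U \<le> pre_nbhd_sub \<tau> A x (U \<inter> A)"
  unfolding pre_nbhd_def pre_nbhd_sub_def
proof (rule sup0_mono[where c = 1])
  fix t assume "t \<in> {preopen \<tau> B | B. x \<in> B \<and> B \<subseteq> U}"
  then obtain B where "t = preopen \<tau> B" "x \<in> B" "B \<subseteq> U" by blast
  with assms preopen_le_preopen_sub[of B A]
  show "\<exists>s\<in>{preopen_sub \<tau> A C | C. x \<in> C \<and> C \<subseteq> U \<inter> A}. t \<le> s"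
    by (intro bexI[of _ "preopen_sub \<tau> A (B \<inter> A)"]) auto
qed (auto intro: preopen_sub_le_one)

lemma pre_separation_le_pre_separation_sub:
  assumes "x \<in> A" "y \<in> A"
  shows "pre_separation \<tau> x y \<le> pre_separation_sub \<tau> A x y"
  unfolding pre_separation_def pre_separation_sub_def
proof (rule sup0_mono[where c = 1])
  fix s assume "s \<in> {min (pre_nbhd \<tau> x U) (pre_nbhd \<tau> y V) | U V. U \<inter> V = {}}"
  then obtain U V where s: "s = min (pre_nbhd \<tau> x U) (pre_nbhd \<tau> y V)" and "U \<inter> V = {}"
    by blast
  then have "U \<inter> A \<subseteq> A \<and> V \<inter> A \<subseteq> A \<and> (U \<inter> A) \<inter> (V \<inter> A) = {}" by blast
  moreover have "s \<le> min (pre_nbhd_sub \<tau> A x (U \<inter> A)) (pre_nbhd_sub \<tau> A y (V \<inter> A))"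
    using s pre_nbhd_le_pre_nbhd_sub[OF assms(1), of U] pre_nbhd_le_pre_nbhd_sub[OF assms(2), of V]
    by linarith
  ultimately show "\<exists>s'\<in>{min (pre_nbhd_sub \<tau> A x U) (pre_nbhd_sub \<tau> A y V) | U V.
                      U \<subseteq> A \<and> V \<subseteq> A \<and> U \<inter> V = {}}. s \<le> s'"
    by blast
qed (auto simp: min_le_iff_disj pre_nbhd_sub_le_one)

end

theorem lemma3p3:
  fixes \<tau> :: "'a set \<Rightarrow> real" and A :: "'a set"
  assumes "fuzzifying_topology \<tau>"
  shows "T2P \<tau> \<le> T2P_sub \<tau> A"
  unfolding T2P_eq_pre_separation T2P_sub_eq_pre_separation_sub
proof (rule inf1_mono)
  fix t assume "t \<in> {pre_separation_sub \<tau> A x y | x y. x \<in> A \<and> y \<in> A \<and> x \<noteq> y}"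
  then obtain x y where "x \<in> A" "y \<in> A" "x \<noteq> y" and "t = pre_separation_sub \<tau> A x y"
    by blast
  with pre_separation_le_pre_separation_sub[OF assms]
  show "\<exists>s\<in>{pre_separation \<tau> x y | x y. x \<noteq> y}. s \<le> t"
    by blast
qed (auto intro: pre_separation_nonneg[OF assms])

end
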